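(* Let $X$ be a compact riemannian lamination and let $\Omega\subseteq Y\subseteq X$ be such that $\Omega$ is open in the leafwise topology and $Y$ is compact in the leafwise topology. There exists an open subset $\hat\Omega$ of $X$ such that $\hat\Omega\cap Y=\Omega$.
   Context: A lamination is a separable metrizable space with an atlas of laminated charts $\Phi:U\to\,]-1,1[^d\times T$ whose transition maps locally have the form $(x,t)\mapsto(\phi(x,t),\tau(t))$ ($\tau$ a homeomorphism onto its image, $\phi(\cdot,t)$ smooth diffeomorphisms varying continuously in $C^\infty_{loc}$ with $t$); plaques glue into smooth manifolds called leaves. A riemannian lamination carries a leafwise smooth leafwise metric. The leafwise topology of $X$ is the smallest topology containing all open subsets of leaves; a set is compact in it iff it is a finite union of compact subsets of leaves. "Open subset of $X$" refers to the ambient topology of $X$. *)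

theory Defs
  imports "HOL-Analysis.Analysis"
begin

fun nderiv :: "'a::real_normed_vector list \<Rightarrow> ('a \<Rightarrow> 'b::real_normed_vector) \<Rightarrow> 'a \<Rightarrow> 'b" where
  "nderiv [] f = f"
| "nderiv (v # vs) f = (\<lambda>x. frechet_derivative (nderiv vs f) (at x) v)"

text \<open>C-infinity on an open set S: all iterated derivatives exist (and hence are continuous).\<close>
definition smooth_on :: "'a::real_normed_vector set \<Rightarrow> ('a \<Rightarrow> 'b::real_normed_vector) \<Rightarrow> bool" where
  "smooth_on S f \<longleftrightarrow> open S \<and> (\<forall>vs. \<forall>x\<in>S. nderiv vs f differentiable (at x))"

definition smooth_diffeo_on :: "'a::real_normed_vector set \<Rightarrow> ('a \<Rightarrow> 'a) \<Rightarrow> bool" where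
  "smooth_diffeo_on S f \<longleftrightarrow> smooth_on S f \<and> inj_on f S \<and> open (f ` S)
      \<and> smooth_on (f ` S) (inv_into S f)"

text \<open>The family t \<mapsto> f(-,t) (t ranging in W, a subset of the space T) is continuous
  for the C-infinity-loc topology on functions on V: for every derivative and every compact
  K in V, the derivatives converge uniformly on K.\<close>
definition cinf_loc_continuous ::
  "'a::real_normed_vector set \<Rightarrow> 't topology \<Rightarrow> 't set \<Rightarrow> ('a \<Rightarrow> 't \<Rightarrow> 'b::real_normed_vector) \<Rightarrow> bool" where
  "cinf_loc_continuous V T W f \<longleftrightarrow>
     (\<forall>vs K t0 e. compact K \<and> K \<subseteq> V \<and> t0 \<in> W \<and> e > 0 \<longrightarrow>
        (\<exists>N. openin T N \<and> t0 \<in> N \<and>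
           (\<forall>t\<in>N \<inter> W. \<forall>x\<in>K.
              dist (nderiv vs (\<lambda>y. f y t) x) (nderiv vs (\<lambda>y. f y t0) x) < e)))"

text \<open>The model plaque ]-1,1[^d, with d = CARD('n).\<close>
definition cube :: "(real^'n) set" where
  "cube = {x. \<forall>i. \<bar>x $ i\<bar> < 1}"

text \<open>A laminated chart: a domain U, a map Phi, and a transversal space T
  (all transversals of an atlas live in a common type 't).\<close>
record ('a, 'n, 't) lchart =
  ch_dom :: "'a set"
  ch_map :: "'a \<Rightarrow> (real^'n) \<times> 't"
  ch_T   :: "'t topology"

definition laminated_chart :: "'a topology \<Rightarrow> ('a, 'n::finite, 't) lchart \<Rightarrow> bool" where
  "laminated_chart X c \<longleftrightarrow> openin X (ch_dom c) \<and>
     homeomorphic_map (subtopology X (ch_dom c))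
        (prod_topology (subtopology euclidean cube) (ch_T c)) (ch_map c)"

text \<open>Transition maps locally of the form (x,t) \<mapsto> (phi(x,t), tau(t)).\<close>
definition compatible_charts :: "('a, 'n::finite, 't) lchart \<Rightarrow> ('a, 'n, 't) lchart \<Rightarrow> bool" where
  "compatible_charts c1 c2 \<longleftrightarrow>
     (\<forall>p \<in> ch_dom c1 \<inter> ch_dom c2.
        \<exists>V W \<phi> \<tau>. open V \<and> V \<subseteq> cube \<and> fst (ch_map c1 p) \<in> V \<and>
          openin (ch_T c1) W \<and> snd (ch_map c1 p) \<in> W \<and>
          V \<times> W \<subseteq> ch_map c1 ` (ch_dom c1 \<inter> ch_dom c2) \<and>
          (\<forall>q \<in> ch_dom c1 \<inter> ch_dom c2. fst (ch_map c1 q) \<in> V \<and> snd (ch_map c1 q) \<in> W \<longrightarrow>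
              ch_map c2 q = (\<phi> (fst (ch_map c1 q)) (snd (ch_map c1 q)), \<tau> (snd (ch_map c1 q)))) \<and>
          embedding_map (subtopology (ch_T c1) W) (ch_T c2) \<tau> \<and>
          (\<forall>t\<in>W. smooth_diffeo_on V (\<lambda>x. \<phi> x t)) \<and>
          cinf_loc_continuous V (ch_T c1) W \<phi>)"

definition lamination :: "'a topology \<Rightarrow> ('a, 'n::finite, 't) lchart set \<Rightarrow> bool" where
  "lamination X A \<longleftrightarrow> metrizable_space X \<and> separable_space X \<and>
     (\<forall>c\<in>A. laminated_chart X c) \<and>
     (\<Union>c\<in>A. ch_dom c) = topspace X \<and>
     (\<forall>c1\<in>A. \<forall>c2\<in>A. compatible_charts c1 c2)"

text \<open>Leafwise topology: generated by the open subsets of plaques, i.e. the sets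
  Phi^-1(V \<times> {t}) with V open in the cube.  (Open subsets of leaves are exactly the
  unions of such sets.)\<close>
definition leafwise_topology :: "('a, 'n::finite, 't) lchart set \<Rightarrow> 'a topology" where
  "leafwise_topology A = topology_generated_by
     {{q \<in> ch_dom c. fst (ch_map c q) \<in> V \<and> snd (ch_map c q) = t} | c V t.
        c \<in> A \<and> open V \<and> V \<subseteq> cube}"

text \<open>A leafwise riemannian metric, given in each chart c by a matrix g c x t (the metric
  of the plaque through t at the point x), symmetric positive definite, smooth in x and
  varying continuously in C-infinity-loc with t, and compatible under the transition maps.\<close>
definition riemannian_lamination ::
  "'a topology \<Rightarrow> ('a, 'n::finite, 't) lchart set \<Rightarrow>
   (('a, 'n, 't) lchart \<Rightarrow> real^'n \<Rightarrow> 't \<Rightarrow> real^'n^'n) \<Rightarrow> bool" where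
  "riemannian_lamination X A g \<longleftrightarrow> lamination X A \<and>
     (\<forall>c\<in>A. (\<forall>x\<in>cube. \<forall>t\<in>topspace (ch_T c).
                 transpose (g c x t) = g c x t \<and> (\<forall>v. v \<noteq> 0 \<longrightarrow> v \<bullet> (g c x t *v v) > 0)) \<and>
             (\<forall>t\<in>topspace (ch_T c). smooth_on cube (\<lambda>x. g c x t)) \<and>
             cinf_loc_continuous cube (ch_T c) (topspace (ch_T c)) (g c)) \<and>
     (\<forall>c1\<in>A. \<forall>c2\<in>A. \<forall>q \<in> ch_dom c1 \<inter> ch_dom c2.
        (let x = fst (ch_map c1 q); t = snd (ch_map c1 q);
             J = jacobian (\<lambda>z. fst (ch_map c2 (inv_into (ch_dom c1) (ch_map c1) (z, t)))) (at x)
         in g c1 x t = transpose J ** g c2 (fst (ch_map c2 q)) (snd (ch_map c2 q)) ** J))"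

end

theory Submission
  imports Defs
begin

text \<open>The leafwise topology is finer than the topology of \<open>X\<close>, because the plaques of a
  laminated chart form a neighbourhood base of \<open>X\<close>.  Hence \<open>Y - \<Omega>\<close>, being leafwise closed
  in the leafwise compact set \<open>Y\<close>, is compact in \<open>X\<close>, so closed since \<open>X\<close> is metrizable;
  its complement is the required open set.\<close>

definition plaque :: "('a, 'n::finite, 't) lchart \<Rightarrow> (real^'n) set \<Rightarrow> 't \<Rightarrow> 'a set" where
  "plaque c V t = {q \<in> ch_dom c. fst (ch_map c q) \<in> V \<and> snd (ch_map c q) = t}"

lemma leafwise_topology_plaques:
  "leafwise_topology A =
     topology_generated_by {plaque c V t | c V t. c \<in> A \<and> open V \<and> V \<subseteq> cube}"
  unfolding leafwise_topology_def plaque_def ..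

lemma open_cube: "open (cube :: (real^'n::finite) set)"
proof -
  have "cube = (\<Inter>i. {x::real^'n. \<bar>x $ i\<bar> < 1})"
    unfolding cube_def by auto
  moreover have "open (\<Inter>i. {x::real^'n. \<bar>x $ i\<bar> < 1})"
    by (intro open_INT ballI open_Collect_less continuous_intros) simp
  ultimately show ?thesis
    by simp
qed

lemma plaque_neighbourhood:
  assumes chart: "laminated_chart X c" and U: "openin X U" and p: "p \<in> U" "p \<in> ch_dom c"
  shows "\<exists>V t. open V \<and> V \<subseteq> cube \<and> p \<in> plaque c V t \<and> plaque c V t \<subseteq> U"
proof -
  let ?P = "prod_topology (subtopology euclidean cube) (ch_T c)"
  have hm: "homeomorphic_map (subtopology X (ch_dom c)) ?P (ch_map c)"
    and dom: "openin X (ch_dom c)"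
    using chart unfolding laminated_chart_def by blast+
  have top: "topspace (subtopology X (ch_dom c)) = ch_dom c"
    using dom openin_subset by auto
  have inj: "inj_on (ch_map c) (ch_dom c)"
    using homeomorphic_imp_injective_map[OF hm] top by simp
  define W where "W = ch_map c ` (ch_dom c \<inter> U)"
  have "openin (subtopology X (ch_dom c)) (ch_dom c \<inter> U)"
    using U by (simp add: openin_subtopology_Int2)
  hence W_open: "openin ?P W"
    unfolding W_def using homeomorphic_map_openness[OF hm] top by blast
  obtain x0 t where pt: "ch_map c p = (x0, t)"
    by (cases "ch_map c p")
  have "ch_map c p \<in> topspace ?P"
    using homeomorphic_imp_continuous_map[OF hm] p top by (metis continuous_map_def Pi_iff)
  hence x0: "x0 \<in> cube" and t: "t \<in> topspace (ch_T c)"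
    using pt by auto
  define V where "V = {x \<in> cube. (x, t) \<in> W}"
  have "continuous_map (subtopology euclidean cube) ?P (\<lambda>x. (x, t))"
    using t by (intro continuous_map_pairedI) auto
  hence "openin (subtopology euclidean cube) V"
    using openin_continuous_map_preimage[OF _ W_open] unfolding V_def by fastforce
  hence "open V"
    using open_cube openin_open_trans by blast
  moreover have "p \<in> plaque c V t"
    using p pt x0 by (auto simp: plaque_def V_def W_def image_iff intro!: bexI[of _ p])
  moreover have "plaque c V t \<subseteq> U"
  proof
    fix q assume q: "q \<in> plaque c V t"
    then obtain q' where q': "q' \<in> ch_dom c \<inter> U" "ch_map c q' = ch_map c q"
      by (auto simp: plaque_def V_def W_def prod_eq_iff)
    with inj q have "q' = q"
      by (auto simp: plaque_def dest: inj_onD)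
    with q' show "q \<in> U" by simp
  qed
  ultimately show ?thesis
    unfolding V_def by blast
qed

lemma openin_imp_openin_leafwise_topology:
  assumes lam: "lamination X A" and U: "openin X U"
  shows "openin (leafwise_topology A) U"
proof -
  define S where "S = {plaque c V t | c V t. c \<in> A \<and> open V \<and> V \<subseteq> cube}"
  have "\<exists>B\<in>S. p \<in> B \<and> B \<subseteq> U" if p: "p \<in> U" for p
  proof -
    from p U lam obtain c where c: "c \<in> A" "p \<in> ch_dom c"
      unfolding lamination_def using openin_subset by blast
    with lam have "laminated_chart X c"
      unfolding lamination_def by blast
    from plaque_neighbourhood[OF this U p c(2)] c show ?thesis
      unfolding S_def by blast
  qed
  hence "U = \<Union>{B \<in> S. B \<subseteq> U}"
    by blast
  moreover have "openin (topology_generated_by S) (\<Union>{B \<in> S. B \<subseteq> U})"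
    unfolding openin_topology_generated_by_iff
    by (rule generate_topology_on.UN) (auto intro: generate_topology_on.Basis)
  ultimately show ?thesis
    unfolding leafwise_topology_plaques S_def by simp
qed

lemma topspace_leafwise_topology_subset:
  assumes "lamination X A"
  shows "topspace (leafwise_topology A) \<subseteq> topspace X"
proof -
  have "topspace (leafwise_topology A) \<subseteq> (\<Union>c\<in>A. ch_dom c)"
    unfolding leafwise_topology_plaques topology_generated_by_topspace plaque_def by blast
  with assms show ?thesis
    unfolding lamination_def by blast
qed

lemma continuous_map_leafwise_topology_id:
  assumes "lamination X A"
  shows "continuous_map (leafwise_topology A) X id"
proof -
  have "openin (leafwise_topology A) {x \<in> topspace (leafwise_topology A). x \<in> U}"
    if "openin X U" for U
  proof -
    have "openin (leafwise_topology A) U"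
      using openin_imp_openin_leafwise_topology[OF assms that] .
    moreover from this have "{x \<in> topspace (leafwise_topology A). x \<in> U} = U"
      using openin_subset by blast
    ultimately show ?thesis
      by simp
  qed
  with topspace_leafwise_topology_subset[OF assms] show ?thesis
    by (auto simp: continuous_map_def)
qed

lemma finer_topology_trace_openin:
  assumes finer: "continuous_map S X id" and "Hausdorff_space X"
    and "\<Omega> \<subseteq> Y" "Y \<subseteq> topspace X" and "openin S \<Omega>" and "compactin S Y"
  shows "\<exists>\<Omega>'. openin X \<Omega>' \<and> \<Omega>' \<inter> Y = \<Omega>"
proof -
  have "Y - \<Omega> = (topspace S - \<Omega>) \<inter> Y"
    using compactin_subset_topspace[OF \<open>compactin S Y\<close>] by blast
  hence "compactin S (Y - \<Omega>)"
    using closed_Int_compactin \<open>openin S \<Omega>\<close> \<open>compactin S Y\<close> by (metis closedin_diff closedin_topspace)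
  hence "compactin X (Y - \<Omega>)"
    using image_compactin[OF _ finer] by fastforce
  hence "openin X (topspace X - (Y - \<Omega>))"
    using compactin_imp_closedin \<open>Hausdorff_space X\<close> by blast
  moreover have "(topspace X - (Y - \<Omega>)) \<inter> Y = \<Omega>"
    using \<open>\<Omega> \<subseteq> Y\<close> \<open>Y \<subseteq> topspace X\<close> by blast
  ultimately show ?thesis
    by blast
qed

theorem lemma4p8:
  fixes X :: "'a topology"
    and A :: "('a, 'n::finite, 't) lchart set"
    and g :: "('a, 'n, 't) lchart \<Rightarrow> real^'n \<Rightarrow> 't \<Rightarrow> real^'n^'n"
    and \<Omega> Y :: "'a set"
  assumes "riemannian_lamination X A g"
    and "compact_space X"
    and "\<Omega> \<subseteq> Y" and "Y \<subseteq> topspace X"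
    and "openin (leafwise_topology A) \<Omega>"
    and "compactin (leafwise_topology A) Y"
  shows "\<exists>\<Omega>'. openin X \<Omega>' \<and> \<Omega>' \<inter> Y = \<Omega>"
proof -
  have lam: "lamination X A"
    using assms(1) unfolding riemannian_lamination_def by blast
  have "Hausdorff_space X"
    using lam metrizable_imp_Hausdorff_space unfolding lamination_def by blast
  from continuous_map_leafwise_topology_id[OF lam] this assms(3-6) show ?thesis
    by (rule finer_topology_trace_openin)
qed

end
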